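(* Let $p>3$ be a prime, let $m\le 2p$, and let $A_1,\ldots,A_m\subseteq[4p]$ with $|A_i|=2p$ for each $i$. Then there exists $C\subseteq[4p]$ with $|C|=3p$ such that $|C\cap A_i|\not\equiv0\pmod p$ for every $1\le i\le m$.
   Context: $[4p]=\{1,\dots,4p\}$. *)

theory Defs
  imports Main "HOL-Computational_Algebra.Primes"
begin

end

theory Submission
  imports Defs
begin

text \<open>
  It suffices to find a set D \<subseteq> [4p] of size p meeting every A i and every complement
  [4p] - A i: then C = [4p] - D satisfies p < |C \<inter> A i| < 2p.  Such a D is found greedily.
  If every set of a family covers at least half of the ground set, double counting gives a
  point lying in at least half of the sets; taking it and recursing on the sets it misses,
  fewer than 2^k sets are hit by k points.  Here there are at most 4p < 2^p sets (p \<noteq> 4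
  is where primality enters).
\<close>

lemma sum_card_containing:
  assumes "finite U" "finite F" "\<forall>S\<in>F. S \<subseteq> U"
  shows "(\<Sum>x\<in>U. card {S\<in>F. x \<in> S}) = (\<Sum>S\<in>F. card S)"
proof (rule sum_multicount_gen[OF assms(1,2)])
  show "\<forall>S\<in>F. card {x\<in>U. x \<in> S} = card S"
    using assms(3) by (auto intro!: arg_cong[where f = card])
qed

lemma exists_point_in_half_of_large_sets:
  assumes "finite U" "finite F" "F \<noteq> {}"
    and large: "\<forall>S\<in>F. S \<subseteq> U \<and> S \<noteq> {} \<and> card U \<le> 2 * card S"
  shows "\<exists>x\<in>U. card F \<le> 2 * card {S\<in>F. x \<in> S}"
proof (rule ccontr)
  assume "\<not> ?thesis"
  then have few: "\<forall>x\<in>U. 2 * card {S\<in>F. x \<in> S} < card F" by auto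
  have "U \<noteq> {}"
    using assms(3) large by blast
  have "card U * card F = (\<Sum>S\<in>F. card U)"
    by simp
  also have "\<dots> \<le> (\<Sum>S\<in>F. 2 * card S)"
    using large by (intro sum_mono) auto
  also have "\<dots> = (\<Sum>x\<in>U. 2 * card {S\<in>F. x \<in> S})"
    using sum_card_containing[OF assms(1,2)] large by (simp flip: sum_distrib_left)
  also have "\<dots> < (\<Sum>x\<in>U. card F)"
    using few by (intro sum_strict_mono[OF assms(1) \<open>U \<noteq> {}\<close>]) auto
  finally show False
    by simp
qed

lemma small_hitting_set:
  assumes "finite U" "finite F"
    and "\<forall>S\<in>F. S \<subseteq> U \<and> S \<noteq> {} \<and> card U \<le> 2 * card S"
    and "card F < 2 ^ k"
  shows "\<exists>D\<subseteq>U. card D \<le> k \<and> (\<forall>S\<in>F. S \<inter> D \<noteq> {})"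
  using assms
proof (induction k arbitrary: U F)
  case 0
  then show ?case by (intro exI[of _ "{}"]) auto
next
  case (Suc k U F)
  show ?case
  proof (cases "F = {}")
    case True
    then show ?thesis by (intro exI[of _ "{}"]) auto
  next
    case False
    obtain x where x: "x \<in> U" "card F \<le> 2 * card {S\<in>F. x \<in> S}"
      using exists_point_in_half_of_large_sets[OF Suc.prems(1,2) False Suc.prems(3)] by blast
    define F' where "F' = {S\<in>F. x \<notin> S}"
    have "card F = card F' + card {S\<in>F. x \<in> S}"
      unfolding F'_def using Suc.prems(2)
      by (subst card_Un_disjoint[symmetric]) (auto intro!: arg_cong[where f = card])
    then have small: "card F' < 2 ^ k"
      using x(2) Suc.prems(4) by simp
    have "finite F'"
      unfolding F'_def using Suc.prems(2) by simp
    have large: "\<forall>S\<in>F'. S \<subseteq> U - {x} \<and> S \<noteq> {} \<and> card (U - {x}) \<le> 2 * card S"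
    proof
      fix S assume "S \<in> F'"
      then have "x \<notin> S" "S \<subseteq> U" "S \<noteq> {}" "card U \<le> 2 * card S"
        using Suc.prems(3) unfolding F'_def by blast+
      then show "S \<subseteq> U - {x} \<and> S \<noteq> {} \<and> card (U - {x}) \<le> 2 * card S"
        using card_Diff1_le[of U x] by auto
    qed
    obtain D where D: "D \<subseteq> U - {x}" "card D \<le> k" "\<forall>S\<in>F'. S \<inter> D \<noteq> {}"
      using Suc.IH[OF finite_Diff[OF Suc.prems(1)] \<open>finite F'\<close> large small] by blast
    have "finite D"
      using D(1) Suc.prems(1) by (meson finite_Diff finite_subset)
    then have "card (insert x D) \<le> Suc k"
      using D(2) by (simp add: card_insert_if)
    moreover have "\<forall>S\<in>F. S \<inter> insert x D \<noteq> {}"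
      using D(3) unfolding F'_def by blast
    ultimately show ?thesis
      using D(1) x(1) by (intro exI[of _ "insert x D"]) blast
  qed
qed

lemma hitting_set_of_card:
  assumes "finite U" "finite F"
    and "\<forall>S\<in>F. S \<subseteq> U \<and> S \<noteq> {} \<and> card U \<le> 2 * card S"
    and "card F < 2 ^ k" "k \<le> card U"
  shows "\<exists>D\<subseteq>U. card D = k \<and> (\<forall>S\<in>F. S \<inter> D \<noteq> {})"
proof -
  obtain D where "D \<subseteq> U" "card D \<le> k" and hits: "\<forall>S\<in>F. S \<inter> D \<noteq> {}"
    using small_hitting_set[OF assms(1-4)] by blast
  obtain D' where "D \<subseteq> D'" "D' \<subseteq> U" "card D' = k"
    using exists_subset_between[OF \<open>card D \<le> k\<close> assms(5) \<open>D \<subseteq> U\<close> assms(1)] by blast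
  moreover have "\<forall>S\<in>F. S \<inter> D' \<noteq> {}"
    using hits \<open>D \<subseteq> D'\<close> by blast
  ultimately show ?thesis
    by blast
qed

lemma card_image_Un_image_le: "finite I \<Longrightarrow> card (f ` I \<union> g ` I) \<le> 2 * card I"
  using card_Un_le[of "f ` I" "g ` I"] card_image_le[of I f] card_image_le[of I g] by linarith

lemma halves_and_complements_large:
  assumes "finite U" "U \<noteq> {}" "\<forall>i\<in>I. A i \<subseteq> U \<and> card U = 2 * card (A i)"
  shows "\<forall>S \<in> A ` I \<union> (\<lambda>i. U - A i) ` I. S \<subseteq> U \<and> S \<noteq> {} \<and> card U \<le> 2 * card S"
proof
  fix S assume "S \<in> A ` I \<union> (\<lambda>i. U - A i) ` I"
  then obtain i where i: "i \<in> I" and S: "S = A i \<or> S = U - A i"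
    by blast
  have "A i \<subseteq> U" "card U = 2 * card (A i)"
    using assms(3) i by simp_all
  moreover have "finite (A i)"
    using \<open>A i \<subseteq> U\<close> assms(1) by (rule finite_subset)
  ultimately have "S \<subseteq> U" "card U = 2 * card S"
    using S by (auto simp: card_Diff_subset)
  moreover have "card S \<noteq> 0"
    using \<open>card U = 2 * card S\<close> assms(1,2) card_0_eq by fastforce
  ultimately show "S \<subseteq> U \<and> S \<noteq> {} \<and> card U \<le> 2 * card S"
    by auto
qed

lemma four_mul_less_two_pow: "5 \<le> p \<Longrightarrow> 4 * p < (2::nat) ^ p"
  by (induction p rule: dec_induct) auto

lemma card_Diff_strict_bounds:
  assumes "finite A" "finite D" "A \<inter> D \<noteq> {}" "\<not> D \<subseteq> A"
  shows "card A < card (A - D) + card D" "card (A - D) < card A"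
proof -
  have "card (A - D) = card A - card (A \<inter> D)"
    using assms(1) by (simp add: card_Diff_subset_Int)
  moreover have "0 < card (A \<inter> D)" "card (A \<inter> D) \<le> card A"
    using assms(1,3) by (simp_all add: card_gt_0_iff card_mono)
  moreover have "card (A \<inter> D) < card D"
    using assms(2,4) by (intro psubset_card_mono) auto
  ultimately show "card A < card (A - D) + card D" "card (A - D) < card A"
    by linarith+
qed

lemma not_dvd_strictly_between: "p < n \<Longrightarrow> n < 2 * p \<Longrightarrow> \<not> p dvd (n::nat)"
  by (auto elim!: dvdE)

lemma prime_gt_3_ge_5: "prime (p::nat) \<Longrightarrow> 3 < p \<Longrightarrow> 5 \<le> p"
  using prime_product[of 2 2] by (cases "p = 4") auto

theorem mainTheorem12:
  fixes p m :: nat and A :: "nat \<Rightarrow> nat set"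
  assumes "prime p" and "p > 3" and "m \<le> 2 * p"
    and "\<And>i. i \<in> {1..m} \<Longrightarrow> A i \<subseteq> {1..4 * p}"
    and "\<And>i. i \<in> {1..m} \<Longrightarrow> card (A i) = 2 * p"
  shows "\<exists>C. C \<subseteq> {1..4 * p} \<and> card C = 3 * p \<and>
           (\<forall>i \<in> {1..m}. \<not> p dvd card (C \<inter> A i))"
proof -
  define U where "U = {1..4 * p}"
  define F where "F = A ` {1..m} \<union> (\<lambda>i. U - A i) ` {1..m}"
  have "p \<ge> 5"
    using assms(1,2) by (rule prime_gt_3_ge_5)
  have U: "finite U" "card U = 4 * p" "U \<noteq> {}"
    unfolding U_def using \<open>p \<ge> 5\<close> by simp_all
  have A: "A i \<subseteq> U" "finite (A i)" "card (A i) = 2 * p" if "i \<in> {1..m}" for i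
    using assms(4,5)[OF that] finite_subset[OF _ U(1)] unfolding U_def by simp_all
  have "card F \<le> 2 * m"
    using card_image_Un_image_le[of "{1..m}" A "\<lambda>i. U - A i"] unfolding F_def by simp
  then have "card F < 2 ^ p"
    using assms(3) four_mul_less_two_pow[OF \<open>p \<ge> 5\<close>] by linarith
  have "finite F"
    unfolding F_def by simp
  have large: "\<forall>S\<in>F. S \<subseteq> U \<and> S \<noteq> {} \<and> card U \<le> 2 * card S"
    unfolding F_def using U(1,3) by (rule halves_and_complements_large) (use A U(2) in simp)
  obtain D where D: "D \<subseteq> U" "card D = p" and hits: "\<forall>S\<in>F. S \<inter> D \<noteq> {}"
    using hitting_set_of_card[OF U(1) \<open>finite F\<close> large \<open>card F < 2 ^ p\<close>] U by auto
  have "finite D"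
    using D(1) U(1) by (rule finite_subset)
  show ?thesis
  proof (intro exI[of _ "U - D"] conjI ballI)
    show "U - D \<subseteq> {1..4 * p}"
      unfolding U_def by blast
    show "card (U - D) = 3 * p"
      using D \<open>finite D\<close> U by (simp add: card_Diff_subset)
    fix i assume i: "i \<in> {1..m}"
    have "A i \<in> F" "U - A i \<in> F"
      using i unfolding F_def by blast+
    then have "A i \<inter> D \<noteq> {}" "(U - A i) \<inter> D \<noteq> {}"
      using hits by simp_all
    then have "p < card (A i - D)" "card (A i - D) < 2 * p"
      using card_Diff_strict_bounds[OF A(2)[OF i] \<open>finite D\<close>] A(3)[OF i] D(2) by auto
    moreover have "(U - D) \<inter> A i = A i - D"
      using A(1)[OF i] by blast
    ultimately show "\<not> p dvd card ((U - D) \<inter> A i)"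
      by (simp add: not_dvd_strictly_between)
  qed
qed

end
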